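(* Let $p(x)=xK_1(x)+x^2K_0(x)$ for $x>0$ (so $\lim_{x\to0^+}p(x)=1$). Then $p$ is strictly increasing on $(0,1/2]$, strictly decreasing on $[(1+\sqrt{17})/8,\infty)$ with $p(x)\to0$ exponentially fast as $x\to\infty$, and $p''(x)<0$ for $x\in[1/2,(1+\sqrt{17})/8]$. Consequently $p$ has a unique global maximum at a point $x_0\in(1/2,(1+\sqrt{17})/8)$, which is the unique solution in that interval of $K_0(x)=xK_1(x)$, and $p(x_0)<1.07$ (numerically $x_0\approx0.5950$, $p(x_0)\approx1.061$).
   Context: $K_\nu$ denotes the modified Bessel function of the second kind of order $\nu$. *)

theory Defs
  imports "HOL-Analysis.Analysis"
begin

definition besselK :: "real \<Rightarrow> real \<Rightarrow> real" where
  "besselK \<nu> x = (LBINT t:{0..}. exp (- x * cosh t) * cosh (\<nu> * t))"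

definition pK :: "real \<Rightarrow> real" where
  "pK x = x * besselK 1 x + x\<^sup>2 * besselK 0 x"

end

theory Submission
  imports Defs
begin

text \<open>Write J k x for the integral of cosh t ^ k * exp (- x * cosh t) over t \<ge> 0, so that
  K_0 = J 0, K_1 = J 1, J k' = - J (k + 1) and, integrating by parts, J 2 = J 0 + J 1 / x.
  With R x = x K_1 x / K_0 x this gives p' = x K_0 (1 - R) and p'' = K_0 (1 + x^2 - 2 R),
  while R solves the Riccati equation x R' = R^2 - x^2 and R > x, so R is strictly increasing.
  Hence p increases while R < 1, decreases once R > 1, and its maximum sits at the unique
  root of R = 1, i.e. of K_0 = x K_1. The limits follow from
  J 1 x = exp (- x) / x + (integral of exp (- t - x cosh t)).

  The numerical part needs K_0 and K_1 to about five digits at 1/2, 0.63 and 3/5: they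
  give R (1/2) < 1 < R (0.63), then R > 0.706 on [1/2, \<infinity>) and hence p'' < 0 on
  [1/2, (1 + sqrt 17)/8], and finally p x0 < 1.07 from the tangent of the concave p at 3/5.
  Certified enclosures come from replacing exp (- a e^t) and exp (- a e^-t) by Taylor
  polynomials of known sign, which turns the integrand into exponentials of integer multiples
  of t that integrate exactly up to ln 32; the remaining tail is bounded explicitly.\<close>

section \<open>Elementary real analysis\<close>

lemma le_cosh_real: "t \<le> cosh (t::real)"
proof (cases "t \<ge> 0")
  case True
  have "2 * t \<le> 1 + t + t\<^sup>2 / 2"
    using zero_le_power2[of "t - 1"] by (simp add: power2_eq_square algebra_simps)
  also have "\<dots> \<le> exp t"
    using exp_lower_Taylor_quadratic True by simp
  also have "exp t \<le> 2 * cosh t"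
    by (simp add: cosh_def)
  finally show ?thesis by simp
next
  case False
  then show ?thesis using cosh_real_pos[of t] by linarith
qed

lemma exp_ge_power_div_fact:
  assumes "0 \<le> y" shows "y ^ k / fact k \<le> exp (y::real)"
proof -
  obtain s where "exp y = (\<Sum>m<Suc k. y ^ m / fact m) + exp s / fact (Suc k) * y ^ Suc k"
    using Maclaurin_exp_le[of y "Suc k"] by blast
  moreover have "y ^ k / fact k \<le> (\<Sum>m<Suc k. y ^ m / fact m)"
    using assms by (intro member_le_sum) auto
  moreover have "0 \<le> exp s / fact (Suc k) * y ^ Suc k" using assms by simp
  ultimately show ?thesis by linarith
qed

lemma exp_minus_le_fact_div_power:
  assumes "0 < w" shows "exp (-w) \<le> fact M / (w::real) ^ M"
proof -
  have "w ^ M \<le> fact M * exp w"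
    using exp_ge_power_div_fact[of w M] assms by (simp add: field_simps)
  then have "w ^ M * exp (-w) \<le> fact M"
    using mult_right_mono[of "w ^ M" "fact M * exp w" "exp (-w)"] by (simp add: mult.assoc flip: exp_add)
  then show ?thesis using assms by (simp add: field_simps)
qed

lemma exp_ge_taylor_sum:
  assumes "0 \<le> y" shows "(\<Sum>m<N. y ^ m / fact m) \<le> exp (y::real)"
proof -
  obtain s where "exp y = (\<Sum>m<N. y ^ m / fact m) + exp s / fact N * y ^ N"
    using Maclaurin_exp_le[of y N] by blast
  moreover have "exp s / fact N * y ^ N \<ge> 0" using assms by simp
  ultimately show ?thesis by linarith
qed

lemma exp_minus_le_taylor_sum_odd:
  assumes "0 \<le> w" "odd N" shows "exp (-w) \<le> (\<Sum>m<N. (-w) ^ m / fact m :: real)"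
proof -
  obtain s where "exp (-w) = (\<Sum>m<N. (-w) ^ m / fact m) + exp s / fact N * (-w) ^ N"
    using Maclaurin_exp_le[of "-w" N] by blast
  moreover have "exp s / fact N * (-w) ^ N \<le> 0"
    using assms by (intro mult_nonneg_nonpos) (auto simp: power_minus_odd)
  ultimately show ?thesis by linarith
qed

lemma exp_minus_ge_taylor_sum_even:
  assumes "0 \<le> w" "even N" shows "(\<Sum>m<N. (-w) ^ m / fact m :: real) \<le> exp (-w)"
proof -
  obtain s where "exp (-w) = (\<Sum>m<N. (-w) ^ m / fact m) + exp s / fact N * (-w) ^ N"
    using Maclaurin_exp_le[of "-w" N] by blast
  moreover have "exp s / fact N * (-w) ^ N \<ge> 0"
    using assms by (simp add: power_minus_even)
  ultimately show ?thesis by linarith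
qed

lemma exp_minus_taylor2_remainder: "\<bar>exp (-u) - 1 + u\<bar> \<le> u\<^sup>2 / 2 * exp \<bar>u\<bar>" for u :: real
proof -
  obtain s where s: "\<bar>s\<bar> \<le> \<bar>u\<bar>" "exp (-u) = (\<Sum>m<2. (-u) ^ m / fact m) + exp s / fact 2 * (-u)\<^sup>2"
    using Maclaurin_exp_le[of "-u" 2] by auto
  then have "\<bar>exp (-u) - 1 + u\<bar> = exp s / 2 * u\<^sup>2" by (simp add: numeral_2_eq_2)
  also have "\<dots> \<le> exp \<bar>u\<bar> / 2 * u\<^sup>2"
    using s(1) by (intro mult_right_mono divide_right_mono) auto
  finally show ?thesis by (simp add: mult.commute)
qed

lemma has_real_derivative_of_quadratic_remainder:
  fixes f :: "real \<Rightarrow> real"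
  assumes "d > 0" and "\<And>h. \<bar>h\<bar> \<le> d \<Longrightarrow> \<bar>f (x + h) - f x - h * D\<bar> \<le> C * h\<^sup>2"
  shows "(f has_real_derivative D) (at x)"
  unfolding DERIV_def
proof -
  have "((\<lambda>h. (f (x + h) - f x) / h - D) \<longlongrightarrow> 0) (at 0)"
  proof (rule Lim_null_comparison)
    have "\<forall>\<^sub>F h in at 0. \<bar>h\<bar> < d \<and> h \<noteq> 0"
      using assms(1) by (auto simp: eventually_at dist_real_def intro!: exI[of _ d])
    then show "\<forall>\<^sub>F h in at 0. norm ((f (x + h) - f x) / h - D) \<le> \<bar>C\<bar> * \<bar>h\<bar>"
    proof eventually_elim
      case (elim h)
      have "norm ((f (x + h) - f x) / h - D) = \<bar>f (x + h) - f x - h * D\<bar> / \<bar>h\<bar>"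
        using elim by (simp add: field_simps abs_divide)
      also have "\<dots> \<le> C * h\<^sup>2 / \<bar>h\<bar>"
        using assms(2)[of h] elim by (intro divide_right_mono) auto
      also have "\<dots> = C * \<bar>h\<bar>"
        using elim by (simp add: power2_eq_square field_simps abs_mult_self_eq flip: abs_mult)
      also have "\<dots> \<le> \<bar>C\<bar> * \<bar>h\<bar>" by (intro mult_right_mono) auto
      finally show ?case .
    qed
    show "((\<lambda>h. \<bar>C\<bar> * \<bar>h\<bar>) \<longlongrightarrow> 0) (at 0)"
      by (rule tendsto_eq_intros | simp)+
  qed
  then have "((\<lambda>h. (f (x + h) - f x) / h - D + D) \<longlongrightarrow> 0 + D) (at 0)"
    by (intro tendsto_intros)
  then show "((\<lambda>h. (f (x + h) - f x) / h) \<longlongrightarrow> D) (at 0)" by simp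
qed

lemma le_tangent_of_antimono_derivative:
  fixes f f' :: "real \<Rightarrow> real"
  assumes deriv: "\<And>y. y \<in> {a..b} \<Longrightarrow> (f has_real_derivative f' y) (at y)"
    and antimono: "\<And>u v. a \<le> u \<Longrightarrow> u \<le> v \<Longrightarrow> v \<le> b \<Longrightarrow> f' v \<le> f' u"
    and "x \<in> {a..b}" "c \<in> {a..b}"
  shows "f x \<le> f c + f' c * (x - c)"
proof (cases x c rule: linorder_cases)
  case less
  obtain z where z: "x < z" "z < c" "f c - f x = (c - x) * f' z"
    using MVT2[OF less, of f f'] deriv assms(3,4) by force
  then have "(c - x) * f' c \<le> (c - x) * f' z"
    using antimono[of z c] assms(3,4) by (intro mult_left_mono) auto
  then show ?thesis using z by (simp add: algebra_simps)
next
  case greater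
  obtain z where z: "c < z" "z < x" "f x - f c = (x - c) * f' z"
    using MVT2[OF greater, of f f'] deriv assms(3,4) by force
  then have "(x - c) * f' z \<le> (x - c) * f' c"
    using antimono[of c z] assms(3,4) by (intro mult_left_mono) auto
  then show ?thesis using z by (simp add: algebra_simps)
qed simp

section \<open>Integrals with an exponentially decaying majorant\<close>

lemma integrable_on_Ici_exp_majorant:
  fixes f :: "real \<Rightarrow> real"
  assumes "continuous_on {a..} f" "\<And>t. t \<ge> a \<Longrightarrow> \<bar>f t\<bar> \<le> C * exp (-b * t)" "b > 0"
  shows "f integrable_on {a..}"
proof (rule measurable_bounded_by_integrable_imp_integrable_real)
  show "f \<in> borel_measurable (lebesgue_on {a..})"
    using assms(1) by (intro continuous_imp_measurable_on_sets_lebesgue) auto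
  show "(\<lambda>t. C * exp (-b * t)) integrable_on {a..}"
    using integrable_on_cmult_left[OF integrable_on_exp_minus_to_infinity[OF assms(3)]] by simp
qed (use assms in auto)

lemma integral_Ici_exp_majorant:
  fixes f :: "real \<Rightarrow> real"
  assumes "continuous_on {a..} f" "\<And>t. t \<ge> a \<Longrightarrow> \<bar>f t\<bar> \<le> C * exp (-b * t)" "b > 0"
  shows "\<bar>integral {a..} f\<bar> \<le> C * exp (-b * a) / b"
proof -
  have majorant: "((\<lambda>t. C * exp (-b * t)) has_integral C * (exp (-b * a) / b)) {a..}"
    by (rule has_integral_mult_right[OF has_integral_exp_minus_to_infinity[OF assms(3)]])
  have "\<bar>integral {a..} f\<bar> \<le> integral {a..} (\<lambda>t. C * exp (-b * t))"
    using integral_norm_bound_integral[OF integrable_on_Ici_exp_majorant[OF assms]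
        has_integral_integrable[OF majorant]] assms(2) by simp
  then show ?thesis using integral_unique[OF majorant] by simp
qed

lemma integral_Ici_split:
  fixes f :: "real \<Rightarrow> real"
  assumes "continuous_on {a..} f" "\<And>t. t \<ge> a \<Longrightarrow> \<bar>f t\<bar> \<le> C * exp (-b * t)" "b > 0" "a \<le> T"
  shows "f integrable_on {a..T}" "f integrable_on {T..}"
    and "integral {a..} f = integral {a..T} f + integral {T..} f"
proof -
  show i1: "f integrable_on {a..T}"
    by (rule integrable_continuous_interval) (use assms(1) in \<open>auto intro: continuous_on_subset\<close>)
  show i2: "f integrable_on {T..}"
    by (rule integrable_on_Ici_exp_majorant[where C = C and b = b])
      (use assms in \<open>auto intro: continuous_on_subset\<close>)
  have "{a..T} \<inter> {T..} = {T}" using assms(4) by auto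
  moreover have "{a..T} \<union> {T..} = {a..}" using assms(4) by auto
  ultimately show "integral {a..} f = integral {a..T} f + integral {T..} f"
    using integral_Un[OF i1 i2] by simp
qed

lemma integral_Icc_tendsto_integral_Ici:
  fixes f :: "real \<Rightarrow> real"
  assumes cont: "continuous_on {a..} f" and bound: "\<And>t. t \<ge> a \<Longrightarrow> \<bar>f t\<bar> \<le> C * exp (-b * t)"
    and "b > 0"
  shows "((\<lambda>T. integral {a..T} f) \<longlongrightarrow> integral {a..} f) at_top"
proof -
  have "((\<lambda>T. integral {T..} f) \<longlongrightarrow> 0) at_top"
  proof (rule Lim_null_comparison)
    show "\<forall>\<^sub>F T in at_top. norm (integral {T..} f) \<le> C * exp (-b * T) / b"
      using eventually_ge_at_top[of a]
    proof eventually_elim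
      case (elim T)
      show ?case
        using integral_Ici_exp_majorant[of T f C b] assms elim
        by (auto intro: continuous_on_subset)
    qed
    show "((\<lambda>T. C * exp (-b * T) / b) \<longlongrightarrow> 0) at_top" using \<open>b > 0\<close> by real_asymp
  qed
  then have "((\<lambda>T. integral {a..} f - integral {T..} f) \<longlongrightarrow> integral {a..} f - 0) at_top"
    by (intro tendsto_intros)
  moreover have "\<forall>\<^sub>F T in at_top. integral {a..} f - integral {T..} f = integral {a..T} f"
    using eventually_ge_at_top[of a]
    by eventually_elim (simp add: integral_Ici_split(3)[OF assms])
  ultimately show ?thesis
    using Lim_transform_eventually by fastforce
qed

lemma integral_Ici_eq_limit_minus:
  fixes F f :: "real \<Rightarrow> real"
  assumes cont: "continuous_on {a..} f" and bound: "\<And>t. t \<ge> a \<Longrightarrow> \<bar>f t\<bar> \<le> C * exp (-b * t)"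
    and "b > 0"
    and deriv: "\<And>t. t \<ge> a \<Longrightarrow> (F has_real_derivative f t) (at t)"
    and lim: "(F \<longlongrightarrow> L) at_top"
  shows "integral {a..} f = L - F a"
proof -
  have antiderivative: "integral {a..T} f = F T - F a" if "a \<le> T" for T
  proof (rule integral_unique, rule fundamental_theorem_of_calculus[OF that])
    fix t assume "t \<in> {a..T}"
    then show "(F has_vector_derivative f t) (at t within {a..T})"
      using deriv[of t] by (auto simp: has_real_derivative_iff_has_vector_derivative
          intro: has_vector_derivative_at_within)
  qed
  have "\<forall>\<^sub>F T in at_top. F T - F a = integral {a..T} f"
    using eventually_ge_at_top[of a] by eventually_elim (simp add: antiderivative)
  moreover have "((\<lambda>T. F T - F a) \<longlongrightarrow> L - F a) at_top" by (intro tendsto_intros lim)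
  ultimately have "((\<lambda>T. integral {a..T} f) \<longlongrightarrow> L - F a) at_top"
    by (rule Lim_transform_eventually[rotated])
  with integral_Icc_tendsto_integral_Ici[OF cont bound \<open>b > 0\<close>] show ?thesis
    using tendsto_unique[OF trivial_limit_at_top_linorder] by metis
qed

lemma set_lebesgue_integral_eq_integral_nonneg:
  fixes f :: "real \<Rightarrow> real"
  assumes "continuous_on {a..} f" "f integrable_on {a..}" "\<And>t. t \<ge> a \<Longrightarrow> f t \<ge> 0"
  shows "(LBINT t:{a..}. f t) = integral {a..} f"
proof -
  have "f absolutely_integrable_on {a..}"
    by (rule nonnegative_absolutely_integrable_1) (use assms in auto)
  then have "integrable lebesgue (\<lambda>t. indicator {a..} t *\<^sub>R f t)"
    by (simp add: set_integrable_def)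
  moreover have "(\<lambda>t. indicator {a..} t *\<^sub>R f t) \<in> borel_measurable lborel"
    using borel_measurable_continuous_on_indicator[of "{a..}" f] assms(1) by simp
  ultimately have "set_integrable lborel {a..} f"
    unfolding set_integrable_def using integrable_completion by blast
  then show ?thesis by (rule set_borel_integral_eq_integral(2))
qed

lemma integral_Ici_ge_of_ge_on_Icc:
  fixes f :: "real \<Rightarrow> real"
  assumes "continuous_on {a..} f" "f integrable_on {a..}" "\<And>t. t \<ge> a \<Longrightarrow> f t \<ge> 0"
    and "a \<le> c" "\<And>t. t \<in> {c..c+1} \<Longrightarrow> f t \<ge> m"
  shows "m \<le> integral {a..} f"
proof -
  have int: "f integrable_on {c..c+1}"
    by (rule integrable_continuous_interval) (use assms(1,4) in \<open>auto intro: continuous_on_subset\<close>)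
  have "m = integral {c..c+1} (\<lambda>t. m)" by simp
  also have "\<dots> \<le> integral {c..c+1} f" by (rule integral_le[OF _ int]) (use assms(5) in auto)
  also have "\<dots> \<le> integral {a..} f"
    by (rule integral_subset_le[OF _ int assms(2)]) (use assms(3,4) in auto)
  finally show ?thesis .
qed

section \<open>The integrals J k\<close>

definition J :: "nat \<Rightarrow> real \<Rightarrow> real" where
  "J k x = integral {0..} (\<lambda>t. cosh t ^ k * exp (- x * cosh t))"

lemma cosh_power_exp_le:
  fixes x t :: real
  assumes "x > 0" "t \<ge> 0"
  shows "cosh t ^ k * exp (- x * cosh t) \<le> fact k * (2 / x) ^ k * exp (- (x / 2) * t)"
proof -
  have "(x * cosh t / 2) ^ k / fact k \<le> exp (x * cosh t / 2)"
    by (rule exp_ge_power_div_fact) (use assms in simp)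
  then have "cosh t ^ k \<le> fact k * (2 / x) ^ k * exp (x * cosh t / 2)"
    using assms by (simp add: field_simps power_mult_distrib power_divide)
  then have "cosh t ^ k * exp (- x * cosh t) \<le> fact k * (2 / x) ^ k * exp (x * cosh t / 2) * exp (- x * cosh t)"
    by (intro mult_right_mono) auto
  also have "\<dots> = fact k * (2 / x) ^ k * exp (- (x / 2) * cosh t)"
    by (simp add: mult.assoc flip: exp_add)
  also have "\<dots> \<le> fact k * (2 / x) ^ k * exp (- (x / 2) * t)"
    using assms le_cosh_real[of t] by (intro mult_left_mono) auto
  finally show ?thesis .
qed

lemma cosh_power_exp_integrable:
  "(x::real) > 0 \<Longrightarrow> (\<lambda>t. cosh t ^ k * exp (- x * cosh t)) integrable_on {0..}"
  by (rule integrable_on_Ici_exp_majorant[where C = "fact k * (2 / x) ^ k" and b = "x / 2"])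
    (use cosh_power_exp_le in \<open>auto intro!: continuous_intros\<close>)

lemma cosh_power_exp_tendsto_0:
  fixes x :: real
  assumes "x > 0"
  shows "((\<lambda>t. cosh t ^ k * exp (- x * cosh t)) \<longlongrightarrow> 0) at_top"
proof (rule Lim_null_comparison)
  show "\<forall>\<^sub>F t in at_top. norm (cosh t ^ k * exp (- x * cosh t)) \<le> fact k * (2 / x) ^ k * exp (- (x / 2) * t)"
    using eventually_ge_at_top[of 0] by eventually_elim (use cosh_power_exp_le[OF assms] in auto)
  show "((\<lambda>t. fact k * (2 / x) ^ k * exp (- (x / 2) * t)) \<longlongrightarrow> 0) at_top"
    using assms by real_asymp
qed

lemma J_nonneg: "x > 0 \<Longrightarrow> 0 \<le> J k x"
  unfolding J_def by (rule integral_nonneg[OF cosh_power_exp_integrable]) auto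

lemma cosh_power_exp_taylor2_le:
  fixes x h t :: real
  assumes h: "\<bar>h\<bar> \<le> x / 2"
  shows "\<bar>cosh t ^ k * exp (- (x + h) * cosh t) - cosh t ^ k * exp (- x * cosh t)
      + h * (cosh t ^ Suc k * exp (- x * cosh t))\<bar>
    \<le> h\<^sup>2 / 2 * (cosh t ^ (k + 2) * exp (- (x / 2) * cosh t))"
    (is "\<bar>?d\<bar> \<le> _")
proof -
  let ?c = "cosh t"
  have "?d = ?c ^ k * exp (- x * ?c) * (exp (- (h * ?c)) - 1 + h * ?c)"
    by (simp add: algebra_simps flip: exp_add)
  then have "\<bar>?d\<bar> = ?c ^ k * exp (- x * ?c) * \<bar>exp (- (h * ?c)) - 1 + h * ?c\<bar>"
    by (simp add: abs_mult)
  also have "\<dots> \<le> ?c ^ k * exp (- x * ?c) * ((h * ?c)\<^sup>2 / 2 * exp \<bar>h * ?c\<bar>)"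
    by (intro mult_left_mono exp_minus_taylor2_remainder) auto
  also have "\<dots> = h\<^sup>2 / 2 * ?c ^ (k + 2) * exp (- x * ?c + \<bar>h\<bar> * ?c)"
    by (simp add: abs_mult power2_eq_square algebra_simps flip: exp_add)
  also have "\<dots> \<le> h\<^sup>2 / 2 * (?c ^ (k + 2) * exp (- (x / 2) * ?c))"
    using h by (auto intro!: mult_left_mono mult_right_mono simp: algebra_simps)
  finally show ?thesis .
qed

text \<open>Differentiation under the integral sign: by the previous lemma the second-order
  remainder of J k at x is dominated by the integrand of J (k + 2) at x / 2.\<close>

lemma J_quadratic_remainder:
  fixes x h :: real
  assumes x: "x > 0" and h: "\<bar>h\<bar> \<le> x / 2"
  shows "\<bar>J k (x + h) - J k x + h * J (Suc k) x\<bar> \<le> h\<^sup>2 / 2 * J (k + 2) (x / 2)"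
proof -
  define g where "g = (\<lambda>y t::real. cosh t ^ k * exp (- y * cosh t))"
  define f2 where "f2 = (\<lambda>t::real. cosh t ^ Suc k * exp (- x * cosh t))"
  define G where "G = (\<lambda>t::real. h\<^sup>2 / 2 * (cosh t ^ (k + 2) * exp (- (x / 2) * cosh t)))"
  have "x + h > 0" using x h by linarith
  then have i1: "g (x + h) integrable_on {0..}"
    unfolding g_def by (rule cosh_power_exp_integrable)
  have i0: "g x integrable_on {0..}"
    unfolding g_def using x by (rule cosh_power_exp_integrable)
  have i2: "(\<lambda>t. h * f2 t) integrable_on {0..}"
    unfolding f2_def using integrable_on_cmult_left[OF cosh_power_exp_integrable[OF x, of "Suc k"]] by simp
  have iG: "G integrable_on {0..}"
    unfolding G_def using x integrable_on_cmult_left[OF cosh_power_exp_integrable[of "x / 2" "k + 2"]] by simp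
  have "J k (x + h) - J k x + h * J (Suc k) x
      = integral {0..} (g (x + h)) - integral {0..} (g x) + integral {0..} (\<lambda>t. h * f2 t)"
    unfolding J_def g_def f2_def by (simp only: integral_mult_right)
  also have "\<dots> = integral {0..} (\<lambda>t. g (x + h) t - g x t + h * f2 t)"
    using integral_add[OF integrable_diff[OF i1 i0] i2] integral_diff[OF i1 i0] by simp
  also have "\<bar>\<dots>\<bar> \<le> integral {0..} G"
  proof (rule integral_norm_bound_integral[OF integrable_add[OF integrable_diff[OF i1 i0] i2] iG,
        simplified real_norm_def])
    fix t :: real
    show "\<bar>g (x + h) t - g x t + h * f2 t\<bar> \<le> G t"
      unfolding g_def f2_def G_def by (rule cosh_power_exp_taylor2_le[OF h])
  qed
  also have "\<dots> = h\<^sup>2 / 2 * J (k + 2) (x / 2)"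
    unfolding G_def J_def by simp
  finally show ?thesis .
qed

lemma J_has_real_derivative:
  "x > 0 \<Longrightarrow> (J k has_real_derivative - J (Suc k) x) (at x)"
  by (rule has_real_derivative_of_quadratic_remainder[where d = "x / 2" and C = "J (k + 2) (x / 2) / 2"])
    (use J_quadratic_remainder in \<open>force simp: algebra_simps\<close>)+

lemma integral_sinh_exp_cosh:
  fixes x :: real
  assumes x: "x > 0"
  shows "integral {0..} (\<lambda>t. sinh t * exp (- x * cosh t)) = exp (-x) / x"
proof -
  have "integral {0..} (\<lambda>t. sinh t * exp (- x * cosh t)) = 0 - (- exp (- x * cosh 0) / x)"
  proof (rule integral_Ici_eq_limit_minus[where C = "2 / x" and b = "x / 2"])
    fix t :: real assume t: "t \<ge> 0"
    have "\<bar>sinh t * exp (- x * cosh t)\<bar> \<le> cosh t ^ 1 * exp (- x * cosh t)"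
      using t by (simp add: abs_mult sinh_le_cosh_real)
    also have "\<dots> \<le> 2 / x * exp (- (x / 2) * t)"
      using cosh_power_exp_le[OF x t, of 1] by simp
    finally show "\<bar>sinh t * exp (- x * cosh t)\<bar> \<le> 2 / x * exp (- (x / 2) * t)" .
    show "((\<lambda>t. - exp (- x * cosh t) / x) has_real_derivative sinh t * exp (- x * cosh t)) (at t)"
      using x by (auto intro!: derivative_eq_intros)
  next
    have "((\<lambda>t. - (cosh t ^ 0 * exp (- x * cosh t)) / x) \<longlongrightarrow> - 0 / x) at_top"
      by (intro tendsto_intros cosh_power_exp_tendsto_0[OF x]) (use x in simp)
    then show "((\<lambda>t. - exp (- x * cosh t) / x) \<longlongrightarrow> 0) at_top" by simp
  qed (use x in \<open>auto intro!: continuous_intros\<close>)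
  then show ?thesis by simp
qed

text \<open>Integration by parts, as (sinh t exp(-x cosh t))' = (cosh t - x sinh t ^ 2) exp(-x cosh t).\<close>

lemma J_2:
  fixes x :: real
  assumes x: "x > 0"
  shows "J 2 x = J 0 x + J 1 x / x"
proof -
  define c where "c = (\<lambda>k t::real. cosh t ^ k * exp (- x * cosh t))"
  have int: "c k integrable_on {0..}" for k
    unfolding c_def using x by (rule cosh_power_exp_integrable)
  have "integral {0..} (\<lambda>t. c 1 t - x * (c 2 t - c 0 t)) = 0 - sinh 0 * exp (- x * cosh 0)"
  proof (rule integral_Ici_eq_limit_minus[where C = "2 / x + x * (8 / x\<^sup>2 + 1)" and b = "x / 2"])
    fix t :: real assume t: "t \<ge> 0"
    have "\<bar>c 1 t - x * (c 2 t - c 0 t)\<bar> \<le> c 1 t + x * (c 2 t + c 0 t)"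
      using x by (auto simp: c_def abs_mult intro!: order.trans[OF abs_triangle_ineq4] mult_left_mono)
    also have "\<dots> \<le> 2 / x * exp (- (x / 2) * t) + x * (8 / x\<^sup>2 * exp (- (x / 2) * t) + 1 * exp (- (x / 2) * t))"
      using cosh_power_exp_le[OF x t, of 1] cosh_power_exp_le[OF x t, of 2] cosh_power_exp_le[OF x t, of 0] x
      unfolding c_def by (intro add_mono mult_left_mono) (auto simp: power2_eq_square)
    finally show "\<bar>c 1 t - x * (c 2 t - c 0 t)\<bar> \<le> (2 / x + x * (8 / x\<^sup>2 + 1)) * exp (- (x / 2) * t)"
      by (simp add: algebra_simps)
    have "c 1 t - x * (c 2 t - c 0 t) = cosh t * exp (- x * cosh t) - x * ((sinh t)\<^sup>2 * exp (- x * cosh t))"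
      using cosh_square_eq[of t] by (simp add: c_def algebra_simps)
    then show "((\<lambda>t. sinh t * exp (- x * cosh t)) has_real_derivative c 1 t - x * (c 2 t - c 0 t)) (at t)"
      by (auto intro!: derivative_eq_intros simp: power2_eq_square algebra_simps)
  next
    show "((\<lambda>t. sinh t * exp (- x * cosh t)) \<longlongrightarrow> 0) at_top"
    proof (rule Lim_null_comparison)
      show "\<forall>\<^sub>F t in at_top. norm (sinh t * exp (- x * cosh t)) \<le> cosh t ^ 1 * exp (- x * cosh t)"
        using eventually_ge_at_top[of 0] by eventually_elim (auto simp: abs_mult sinh_le_cosh_real)
    qed (rule cosh_power_exp_tendsto_0[OF x])
  qed (use x in \<open>auto simp: c_def intro!: continuous_intros\<close>)
  moreover have "J k x = integral {0..} (c k)" for k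
    unfolding J_def c_def ..
  moreover have "integral {0..} (\<lambda>t. c 1 t - x * (c 2 t - c 0 t))
      = integral {0..} (c 1) - x * (integral {0..} (c 2) - integral {0..} (c 0))"
    using integral_diff[OF int integrable_on_cmult_left[OF integrable_diff[OF int int]]]
      integral_diff[OF int int]
    by simp
  ultimately show ?thesis using x by (simp add: field_simps)
qed

definition Jexp :: "real \<Rightarrow> real" where
  "Jexp x = integral {0..} (\<lambda>t. exp (-t) * exp (- x * cosh t))"

lemma exp_exp_cosh_integrable:
  "(x::real) > 0 \<Longrightarrow> (\<lambda>t. exp (-t) * exp (- x * cosh t)) integrable_on {0..}"
  by (rule integrable_on_Ici_exp_majorant[where C = 1 and b = 1])
    (auto intro!: continuous_intros mult_left_le_one_le)

lemma J_1_eq_Jexp: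
  fixes x :: real
  assumes x: "x > 0"
  shows "J 1 x = exp (-x) / x + Jexp x"
proof -
  have "(\<lambda>t. sinh t * exp (- x * cosh t)) integrable_on {0..}"
    by (rule integrable_on_Ici_exp_majorant[where C = "2 / x" and b = "x / 2"])
      (use x cosh_power_exp_le[OF x, of _ 1] in \<open>auto intro!: continuous_intros simp: abs_mult
        intro: order.trans[OF mult_right_mono[OF sinh_le_cosh_real]]\<close>)
  moreover have "cosh t = sinh t + exp (-t)" for t :: real
    by (simp add: cosh_def sinh_def exp_minus field_simps)
  ultimately show ?thesis
    using integral_add[OF _ exp_exp_cosh_integrable[OF x]] integral_sinh_exp_cosh[OF x]
    by (simp add: J_def Jexp_def distrib_right)
qed

lemma Jexp_nonneg: "x > 0 \<Longrightarrow> 0 \<le> Jexp x"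
  unfolding Jexp_def by (rule integral_nonneg[OF exp_exp_cosh_integrable]) auto

lemma Jexp_le_exp:
  fixes x :: real
  assumes x: "x > 0"
  shows "Jexp x \<le> exp (-x)"
proof -
  have majorant: "((\<lambda>t. exp (-x) * exp (-1 * t)) has_integral exp (-x) * (exp (-1 * 0) / 1)) {0..}"
    by (rule has_integral_mult_right[OF has_integral_exp_minus_to_infinity]) simp
  have "Jexp x \<le> integral {0..} (\<lambda>t. exp (-x) * exp (-1 * t))"
    unfolding Jexp_def using x
    by (intro integral_le[OF exp_exp_cosh_integrable[OF x] has_integral_integrable[OF majorant]])
      (auto simp: mult.commute cosh_real_ge_1 intro!: mult_left_mono)
  then show ?thesis using integral_unique[OF majorant] by simp
qed

lemma J_0_le_inverse:
  fixes x :: real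
  assumes x: "x > 0"
  shows "J 0 x \<le> 1 / x"
proof -
  have "J 0 x \<le> integral {0..} (\<lambda>t. exp (- x * t))"
    unfolding J_def using x le_cosh_real
    by (intro integral_le cosh_power_exp_integrable integrable_on_exp_minus_to_infinity)
      (auto simp: mult_left_mono)
  also have "\<dots> = 1 / x"
    using integral_unique[OF has_integral_exp_minus_to_infinity[OF x, of 0]] by simp
  finally show ?thesis .
qed

lemma J_0_le_exp:
  fixes x :: real
  assumes x: "x \<ge> 1"
  shows "J 0 x \<le> exp 1 * J 0 1 * exp (-x)"
proof -
  have "- x * cosh t \<le> 1 + (-x) + (- 1 * cosh t)" for t :: real
    using mult_left_mono[OF cosh_real_ge_1[of t], of "x - 1"] x by (simp add: algebra_simps)
  moreover have "(\<lambda>t. (exp 1 * exp (-x)) * (cosh t ^ 0 * exp (- 1 * cosh t))) integrable_on {0..}"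
    using integrable_on_cmult_left[OF cosh_power_exp_integrable[of 1 0]] by simp
  ultimately have "J 0 x \<le> integral {0..} (\<lambda>t. (exp 1 * exp (-x)) * (cosh t ^ 0 * exp (- 1 * cosh t)))"
    unfolding J_def using x
    by (intro integral_le cosh_power_exp_integrable) (auto simp flip: exp_add simp: mult.assoc)
  then show ?thesis unfolding J_def by (simp add: mult_ac)
qed

lemma J_0_pos:
  fixes x :: real
  assumes x: "x > 0"
  shows "0 < J 0 x"
proof -
  have "exp (- x * cosh 2) \<le> J 0 x"
    unfolding J_def
  proof (rule integral_Ici_ge_of_ge_on_Icc[where c = 1])
    fix t :: real assume "t \<in> {1..1 + 1}"
    then have "cosh t \<le> cosh 2" by (subst cosh_real_nonneg_le_iff) auto
    then show "exp (- x * cosh 2) \<le> cosh t ^ 0 * exp (- x * cosh t)"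
      using x by (simp add: mult_left_mono)
  qed (use cosh_power_exp_integrable[OF x, of 0] in \<open>auto intro!: continuous_intros\<close>)
  then show ?thesis using exp_gt_zero[of "- x * cosh 2"] by linarith
qed

lemma J_0_less_J_1:
  fixes x :: real
  assumes x: "x > 0"
  shows "J 0 x < J 1 x"
proof -
  define d where "d = (\<lambda>t. cosh t ^ 1 * exp (- x * cosh t) - cosh t ^ 0 * exp (- x * cosh t))"
  have int: "d integrable_on {0..}"
    unfolding d_def using x by (intro integrable_diff cosh_power_exp_integrable)
  have "1 < cosh (1::real)" using cosh_real_nonneg_less_iff[of 0 1] by simp
  have "(cosh 1 - 1) * exp (- x * cosh 2) \<le> integral {0..} d"
  proof (rule integral_Ici_ge_of_ge_on_Icc[OF _ int _ _, where c = 1])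
    fix t :: real assume "t \<in> {1..1 + 1}"
    then have "cosh 1 \<le> cosh t" "cosh t \<le> cosh 2" by (subst cosh_real_nonneg_le_iff; auto)+
    then have "(cosh 1 - 1) * exp (- x * cosh 2) \<le> (cosh t - 1) * exp (- x * cosh t)"
      using \<open>1 < cosh 1\<close> x by (intro mult_mono) (auto simp: mult_left_mono)
    then show "(cosh 1 - 1) * exp (- x * cosh 2) \<le> d t"
      by (simp add: d_def algebra_simps)
  qed (auto simp: d_def algebra_simps cosh_real_ge_1 intro!: continuous_intros)
  moreover have "integral {0..} d = J 1 x - J 0 x"
    unfolding d_def J_def using x by (intro integral_diff cosh_power_exp_integrable)
  moreover have "0 < (cosh 1 - 1) * exp (- x * cosh 2)" using \<open>1 < cosh 1\<close> by simp
  ultimately show ?thesis by linarith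
qed

section \<open>The function pK\<close>

lemma besselK_eq_J:
  fixes x :: real
  assumes x: "x > 0"
  shows "besselK 0 x = J 0 x" "besselK 1 x = J 1 x"
proof -
  have "besselK 0 x = (LBINT t:{0..}. cosh t ^ 0 * exp (- x * cosh t))"
    by (simp add: besselK_def)
  also have "\<dots> = J 0 x"
    unfolding J_def
    by (rule set_lebesgue_integral_eq_integral_nonneg[OF _ cosh_power_exp_integrable[OF x]])
      (auto intro!: continuous_intros)
  finally show "besselK 0 x = J 0 x" .
  have "besselK 1 x = (LBINT t:{0..}. cosh t ^ 1 * exp (- x * cosh t))"
    by (simp add: besselK_def mult.commute)
  also have "\<dots> = J 1 x"
    unfolding J_def
    by (rule set_lebesgue_integral_eq_integral_nonneg[OF _ cosh_power_exp_integrable[OF x]])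
      (auto intro!: continuous_intros)
  finally show "besselK 1 x = J 1 x" .
qed

lemma pK_eq_J: "x > 0 \<Longrightarrow> pK x = x * J 1 x + x\<^sup>2 * J 0 x"
  by (simp add: pK_def besselK_eq_J)

lemma pK_eq_Jexp: "x > 0 \<Longrightarrow> pK x = exp (-x) + x * Jexp x + x\<^sup>2 * J 0 x"
  unfolding pK_eq_J J_1_eq_Jexp by (simp add: field_simps)

definition pK' :: "real \<Rightarrow> real" where
  "pK' x = x * J 0 x - x\<^sup>2 * J 1 x"

definition pK'' :: "real \<Rightarrow> real" where
  "pK'' x = (1 + x\<^sup>2) * J 0 x - 2 * x * J 1 x"

lemma pK_has_real_derivative:
  fixes x :: real
  assumes x: "x > 0"
  shows "(pK has_real_derivative pK' x) (at x)"
proof -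
  have "((\<lambda>y. y * J 1 y + y\<^sup>2 * J 0 y) has_real_derivative
          1 * J 1 x + x * (- J 2 x) + (2 * x) * J 0 x + x\<^sup>2 * (- J 1 x)) (at x)"
    by (auto intro!: derivative_eq_intros J_has_real_derivative[OF x, THEN DERIV_cong]
        simp: numeral_2_eq_2)
  also have "1 * J 1 x + x * (- J 2 x) + (2 * x) * J 0 x + x\<^sup>2 * (- J 1 x) = pK' x"
    using x by (simp add: J_2 pK'_def field_simps power2_eq_square)
  finally show ?thesis
    by (rule has_field_derivative_transform_within_open[where S = "{0<..}"])
      (use x pK_eq_J in auto)
qed

lemma pK'_has_real_derivative:
  fixes x :: real
  assumes x: "x > 0"
  shows "(pK' has_real_derivative pK'' x) (at x)"
proof -
  have "((\<lambda>y. y * J 0 y - y\<^sup>2 * J 1 y) has_real_derivative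
          1 * J 0 x + x * (- J 1 x) - ((2 * x) * J 1 x + x\<^sup>2 * (- J 2 x))) (at x)"
    by (auto intro!: derivative_eq_intros J_has_real_derivative[OF x, THEN DERIV_cong]
        simp: numeral_2_eq_2)
  also have "1 * J 0 x + x * (- J 1 x) - ((2 * x) * J 1 x + x\<^sup>2 * (- J 2 x)) = pK'' x"
    using x by (simp add: J_2 pK''_def field_simps power2_eq_square)
  finally show ?thesis unfolding pK'_def[abs_def] .
qed

lemma pK_tendsto_1_at_right_0: "(pK \<longlongrightarrow> 1) (at_right 0)"
proof -
  have "((\<lambda>x::real. x * Jexp x + x\<^sup>2 * J 0 x) \<longlongrightarrow> 0) (at_right 0)"
  proof (rule Lim_null_comparison)
    show "\<forall>\<^sub>F x in at_right 0. norm (x * Jexp x + x\<^sup>2 * J 0 x) \<le> 2 * x"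
    proof (rule eventually_at_right_less[THEN eventually_mono])
      fix x :: real assume x: "0 < x"
      have "x * Jexp x \<le> x * 1"
        using order_trans[OF Jexp_le_exp[OF x], of 1] x by (intro mult_left_mono) auto
      moreover have "x\<^sup>2 * J 0 x \<le> x\<^sup>2 * (1 / x)"
        using J_0_le_inverse[OF x] by (intro mult_left_mono) auto
      moreover have "0 \<le> x * Jexp x" "0 \<le> x\<^sup>2 * J 0 x"
        using Jexp_nonneg[OF x] J_nonneg[OF x] x by auto
      moreover have "x\<^sup>2 * (1 / x) = x" using x by (simp add: power2_eq_square)
      ultimately show "norm (x * Jexp x + x\<^sup>2 * J 0 x) \<le> 2 * x" by simp
    qed
    show "((\<lambda>x::real. 2 * x) \<longlongrightarrow> 0) (at_right 0)" by (rule tendsto_eq_intros | simp)+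
  qed
  then have "((\<lambda>x::real. exp (-x) + (x * Jexp x + x\<^sup>2 * J 0 x)) \<longlongrightarrow> exp (-0) + 0) (at_right 0)"
    by (intro tendsto_intros)
  moreover have "\<forall>\<^sub>F x in at_right 0. exp (-x) + (x * Jexp x + x\<^sup>2 * J 0 x) = pK x"
    by (rule eventually_at_right_less[THEN eventually_mono]) (simp add: pK_eq_Jexp)
  ultimately show ?thesis
    using Lim_transform_eventually by fastforce
qed

lemma pK_exp_decay: "\<forall>\<^sub>F x in at_top. \<bar>pK x\<bar> \<le> exp (- (1 / 2) * x)"
proof -
  define K where "K = exp 1 * J 0 1"
  have "\<forall>\<^sub>F x in at_top. (1 + x + K * x\<^sup>2) * exp (-x) \<le> exp (- (1 / 2) * x)"
    by real_asymp
  then show ?thesis using eventually_ge_at_top[of 1]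
  proof eventually_elim
    case (elim x)
    then have x: "x > 0" by simp
    have "0 \<le> pK x"
      using pK_eq_Jexp[OF x] Jexp_nonneg[OF x] J_nonneg[OF x] x by simp
    moreover have "x * Jexp x \<le> x * exp (-x)"
      using Jexp_le_exp[OF x] x by (intro mult_left_mono) auto
    moreover have "x\<^sup>2 * J 0 x \<le> x\<^sup>2 * (K * exp (-x))"
      using J_0_le_exp[of x] elim unfolding K_def by (intro mult_left_mono) auto
    moreover have "(1 + x + K * x\<^sup>2) * exp (-x) = exp (-x) + x * exp (-x) + x\<^sup>2 * (K * exp (-x))"
      by (simp add: algebra_simps)
    ultimately show ?case
      using elim pK_eq_Jexp[OF x] by linarith
  qed
qed

lemma pK_tendsto_0_at_top: "(pK \<longlongrightarrow> 0) at_top"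
proof (rule Lim_null_comparison)
  show "\<forall>\<^sub>F x in at_top. norm (pK x) \<le> exp (- (1 / 2) * x)" using pK_exp_decay by simp
  show "((\<lambda>x::real. exp (- (1 / 2) * x)) \<longlongrightarrow> 0) at_top" by real_asymp
qed

definition Kratio :: "real \<Rightarrow> real" where
  "Kratio x = x * J 1 x / J 0 x"

lemma Kratio_gt: "x > 0 \<Longrightarrow> x < Kratio x"
  using J_0_less_J_1[of x] J_0_pos[of x] by (simp add: Kratio_def field_simps)

lemma Kratio_has_real_derivative:
  fixes x :: real
  assumes x: "x > 0"
  shows "(Kratio has_real_derivative (Kratio x ^ 2 - x ^ 2) / x) (at x)"
proof -
  have "J 0 x \<noteq> 0" using J_0_pos[OF x] by simp
  have "((\<lambda>y. y * J 1 y / J 0 y) has_real_derivative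
      ((1 * J 1 x + x * (- J 2 x)) * J 0 x - x * J 1 x * (- J 1 x)) / (J 0 x * J 0 x)) (at x)"
    by (auto intro!: derivative_eq_intros J_has_real_derivative[OF x, THEN DERIV_cong]
        simp: \<open>J 0 x \<noteq> 0\<close> numeral_2_eq_2)
  also have "((1 * J 1 x + x * (- J 2 x)) * J 0 x - x * J 1 x * (- J 1 x)) / (J 0 x * J 0 x)
      = (Kratio x ^ 2 - x ^ 2) / x"
    unfolding Kratio_def using x \<open>J 0 x \<noteq> 0\<close> by (simp add: J_2 field_simps power2_eq_square)
  finally show ?thesis unfolding Kratio_def[abs_def] .
qed

lemma Kratio_strict_mono:
  fixes x y :: real
  assumes "0 < x" "x < y"
  shows "Kratio x < Kratio y"
proof (rule DERIV_pos_imp_increasing[OF assms(2)])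
  fix z assume "x \<le> z" "z \<le> y"
  then have z: "z > 0" using assms by linarith
  then have "z ^ 2 < Kratio z ^ 2" using Kratio_gt[OF z] by (simp add: power_strict_mono)
  then show "\<exists>d. (Kratio has_real_derivative d) (at z) \<and> d > 0"
    using Kratio_has_real_derivative[OF z] z by auto
qed

lemma Kratio_mono: "0 < x \<Longrightarrow> x \<le> y \<Longrightarrow> Kratio x \<le> Kratio y"
  using Kratio_strict_mono[of x y] by (cases "x = y") auto

lemma pK'_eq_Kratio: "x > 0 \<Longrightarrow> pK' x = x * J 0 x * (1 - Kratio x)"
  using J_0_pos[of x] by (simp add: pK'_def Kratio_def field_simps power2_eq_square)

lemma pK''_eq_Kratio: "x > 0 \<Longrightarrow> pK'' x = J 0 x * (1 + x\<^sup>2 - 2 * Kratio x)"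
  using J_0_pos[of x] by (simp add: pK''_def Kratio_def field_simps power2_eq_square)

lemma pK_less_if_Kratio_le_1:
  fixes x y :: real
  assumes "0 < x" "x < y" "Kratio y \<le> 1"
  shows "pK x < pK y"
proof -
  obtain z where z: "x < z" "z < y" "pK y - pK x = (y - x) * pK' z"
    using MVT2[OF assms(2), of pK pK'] pK_has_real_derivative assms(1) by force
  have "0 < pK' z"
    using pK'_eq_Kratio[of z] Kratio_strict_mono[of z y] J_0_pos[of z] z assms by simp
  then show ?thesis using z mult_pos_pos[of "y - x" "pK' z"] by linarith
qed

lemma pK_greater_if_Kratio_ge_1:
  fixes x y :: real
  assumes "0 < x" "x < y" "1 \<le> Kratio x"
  shows "pK y < pK x"
proof -
  obtain z where z: "x < z" "z < y" "pK y - pK x = (y - x) * pK' z"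
    using MVT2[OF assms(2), of pK pK'] pK_has_real_derivative assms(1) by force
  have "pK' z < 0"
    using pK'_eq_Kratio[of z] Kratio_strict_mono[of x z] J_0_pos[of z] z assms
    by (simp add: mult_pos_neg)
  then show ?thesis using z mult_pos_neg[of "y - x" "pK' z"] by linarith
qed

section \<open>Certified enclosures of J 0 and Jexp\<close>

definition exp_taylor_coeff :: "real \<Rightarrow> nat \<Rightarrow> real" where
  "exp_taylor_coeff a m = (-a) ^ m / fact m"

text \<open>The integral of exp(k t) over [0, ln r] is (r powi k - 1) / k, or ln r when k = 0;
  this is its part without the logarithm.\<close>

definition exp_int_integral :: "real \<Rightarrow> int \<Rightarrow> real" where
  "exp_int_integral r k = (if k = 0 then 0 else (r powi k - 1) / of_int k)"

definition trunc_integrand :: "nat \<Rightarrow> nat \<Rightarrow> nat \<Rightarrow> real \<Rightarrow> real \<Rightarrow> real" where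
  "trunc_integrand NP NQ j a t =
    (\<Sum>m<NP. \<Sum>i<NQ. exp_taylor_coeff a m * exp_taylor_coeff a i * exp (of_int (int m - int i - int j) * t))"

definition trunc_integral_rat :: "nat \<Rightarrow> nat \<Rightarrow> nat \<Rightarrow> real \<Rightarrow> real \<Rightarrow> real" where
  "trunc_integral_rat NP NQ j a r =
    (\<Sum>m<NP. \<Sum>i<NQ. exp_taylor_coeff a m * exp_taylor_coeff a i * exp_int_integral r (int m - int i - int j))"

definition trunc_integral_ln :: "nat \<Rightarrow> nat \<Rightarrow> nat \<Rightarrow> real \<Rightarrow> real" where
  "trunc_integral_ln NP NQ j a =
    (\<Sum>m<NP. \<Sum>i<NQ. exp_taylor_coeff a m * exp_taylor_coeff a i * of_bool (int m - int i - int j = 0))"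

lemmas taylor_eval_simps = lessThan_nat_numeral fact_numeral power_numeral_even power_numeral_odd Let_def

lemmas trunc_eval_simps = trunc_integral_rat_def trunc_integral_ln_def exp_taylor_coeff_def
  exp_int_integral_def taylor_eval_simps

lemma has_integral_exp_int:
  fixes r :: real
  assumes r: "r \<ge> 1"
  shows "((\<lambda>t. exp (of_int k * t)) has_integral exp_int_integral r k + of_bool (k = 0) * ln r) {0..ln r}"
proof (cases "k = 0")
  case True
  have "((\<lambda>t. 1::real) has_integral ln r - 0) {0..ln r}"
    by (rule fundamental_theorem_of_calculus)
      (use r in \<open>auto intro!: derivative_eq_intros simp flip: has_real_derivative_iff_has_vector_derivative\<close>)
  then show ?thesis using True by (simp add: exp_int_integral_def)
next
  case False
  have "((\<lambda>t. exp (of_int k * t)) has_integral exp (of_int k * ln r) / of_int k - exp (of_int k * 0) / of_int k) {0..ln r}"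
    by (rule fundamental_theorem_of_calculus)
      (use r False in \<open>auto intro!: derivative_eq_intros simp flip: has_real_derivative_iff_has_vector_derivative\<close>)
  moreover have "exp (of_int k * ln r) = r powi k"
    using r powr_real_of_int'[of r k] by (simp add: powr_def mult.commute)
  ultimately show ?thesis using False by (simp add: exp_int_integral_def diff_divide_distrib)
qed

lemma trunc_integrand_has_integral:
  assumes "r \<ge> 1"
  shows "(trunc_integrand NP NQ j a has_integral
      trunc_integral_rat NP NQ j a r + trunc_integral_ln NP NQ j a * ln r) {0..ln r}"
proof -
  let ?c = "\<lambda>m i. exp_taylor_coeff a m * exp_taylor_coeff a i" and ?k = "\<lambda>m i. int m - int i - int j"
  have "((\<lambda>t. \<Sum>m<NP. \<Sum>i<NQ. ?c m i * exp (of_int (?k m i) * t)) has_integral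
        (\<Sum>m<NP. \<Sum>i<NQ. ?c m i * (exp_int_integral r (?k m i) + of_bool (?k m i = 0) * ln r))) {0..ln r}"
    by (intro has_integral_sum finite_lessThan has_integral_mult_right has_integral_exp_int assms)
  moreover have "(\<Sum>m<NP. \<Sum>i<NQ. ?c m i * (exp_int_integral r (?k m i) + of_bool (?k m i = 0) * ln r))
      = trunc_integral_rat NP NQ j a r + trunc_integral_ln NP NQ j a * ln r"
    unfolding trunc_integral_rat_def trunc_integral_ln_def
    by (simp add: sum.distrib sum_distrib_left sum_distrib_right algebra_simps)
  ultimately show ?thesis
    unfolding trunc_integrand_def[abs_def] by (simp only:)
qed

lemma trunc_integrand_eq_product:
  "(\<Sum>m<NP. exp_taylor_coeff a m * exp t ^ m) * (\<Sum>i<NQ. exp_taylor_coeff a i * exp (-t) ^ i)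
     * exp (- (real j * t)) = trunc_integrand NP NQ j a t"
proof -
  have exp_int: "exp (of_int (int m - int i - int j) * t) = exp t ^ m * exp (-t) ^ i * exp (- (real j * t))"
    for m i
  proof -
    have "exp t ^ m * exp (-t) ^ i * exp (- (real j * t)) = exp (real m * t + real i * (-t) + (- (real j * t)))"
      by (simp only: exp_add exp_of_nat_mult)
    also have "real m * t + real i * (-t) + (- (real j * t)) = of_int (int m - int i - int j) * t"
      by (simp add: algebra_simps)
    finally show ?thesis ..
  qed
  show ?thesis
    unfolding trunc_integrand_def exp_int sum_product unfolding sum_distrib_right
    by (simp only: mult_ac)
qed
lemma exp_taylor_coeff_sum: "(\<Sum>m<N. (- (a * z)) ^ m / fact m) = (\<Sum>m<N. exp_taylor_coeff a m * z ^ m)"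
proof (intro sum.cong refl)
  fix m
  have "(- (a * z)) ^ m = (- a) ^ m * z ^ m"
    by (simp only: mult_minus_left[symmetric] power_mult_distrib)
  then show "(- (a * z)) ^ m / fact m = exp_taylor_coeff a m * z ^ m"
    by (simp add: exp_taylor_coeff_def)
qed

lemma exp_minus_mult_cosh:
  fixes a t :: real
  shows "exp (- (2 * a) * cosh t) = exp (- (a * exp t)) * exp (- (a * exp (-t)))"
proof -
  have "- (2 * a) * cosh t = - (a * exp t) + - (a * exp (-t))"
    by (simp add: cosh_def algebra_simps)
  then show ?thesis by (simp only: exp_add)
qed
lemma weighted_integrand_le_trunc:
  fixes a t :: real
  assumes "a > 0" "odd NP" "odd NQ"
  shows "exp (- (real j * t)) * exp (- (2 * a) * cosh t) \<le> trunc_integrand NP NQ j a t"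
proof -
  have e1: "exp (- (a * exp t)) \<le> (\<Sum>m<NP. exp_taylor_coeff a m * exp t ^ m)"
    using exp_minus_le_taylor_sum_odd[of "a * exp t" NP] assms by (simp add: exp_taylor_coeff_sum)
  have e2: "exp (- (a * exp (-t))) \<le> (\<Sum>i<NQ. exp_taylor_coeff a i * exp (-t) ^ i)"
    using exp_minus_le_taylor_sum_odd[of "a * exp (-t)" NQ] assms by (simp add: exp_taylor_coeff_sum)
  have "exp (- (a * exp t)) * exp (- (a * exp (-t)))
      \<le> (\<Sum>m<NP. exp_taylor_coeff a m * exp t ^ m) * (\<Sum>i<NQ. exp_taylor_coeff a i * exp (-t) ^ i)"
    by (rule mult_mono[OF e1 e2 order_trans[OF exp_ge_zero e1] exp_ge_zero])
  then show ?thesis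
    unfolding exp_minus_mult_cosh trunc_integrand_eq_product[symmetric]
    by (simp add: mult.commute[of "exp (- (real j * t))"])
qed

text \<open>Four terms in exp(-t) suffice because a exp(-t) \<le> 1 makes that cubic Taylor polynomial
  nonnegative, which the lower product bound needs.\<close>

lemma trunc_le_weighted_integrand:
  fixes a t :: real
  assumes a: "a > 0" "a \<le> 1" and "even NP" and t: "t \<ge> 0"
  shows "trunc_integrand NP 4 j a t \<le> exp (- (real j * t)) * exp (- (2 * a) * cosh t)"
proof -
  define y where "y = a * exp (-t)"
  have y: "0 \<le> y" "y \<le> 1"
    using a t mult_mono[of a 1 "exp (-t)" 1] by (auto simp: y_def)
  have e1: "(\<Sum>m<NP. exp_taylor_coeff a m * exp t ^ m) \<le> exp (- (a * exp t))"
    using exp_minus_ge_taylor_sum_even[of "a * exp t" NP] assms by (simp add: exp_taylor_coeff_sum)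
  have e2: "(\<Sum>i<4. exp_taylor_coeff a i * exp (-t) ^ i) \<le> exp (- (a * exp (-t)))"
    using exp_minus_ge_taylor_sum_even[of "a * exp (-t)" 4] a by (simp add: exp_taylor_coeff_sum)
  have "(\<Sum>i<4. exp_taylor_coeff a i * exp (-t) ^ i) = 1 - y + y ^ 2 / 2 - y ^ 3 / 6"
    unfolding y_def exp_taylor_coeff_sum[symmetric] by (simp add: eval_nat_numeral field_simps)
  also have "\<dots> \<ge> 0"
  proof -
    have "y ^ 3 \<le> y ^ 2" "y ^ 2 \<le> y"
      using y power_decreasing[of 2 3 y] power_decreasing[of 1 2 y] by auto
    then show ?thesis using y zero_le_power2[of y] by linarith
  qed
  finally have "(\<Sum>m<NP. exp_taylor_coeff a m * exp t ^ m) * (\<Sum>i<4. exp_taylor_coeff a i * exp (-t) ^ i)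
      \<le> exp (- (a * exp t)) * exp (- (a * exp (-t)))"
    by (intro mult_mono[OF e1 e2 exp_ge_zero])
  then show ?thesis
    unfolding exp_minus_mult_cosh trunc_integrand_eq_product[symmetric]
    by (simp add: mult.commute[of "exp (- (real j * t))"])
qed

lemma weighted_integrand_le_exp:
  fixes a t :: real
  assumes "a > 0" "t \<ge> 0"
  shows "exp (- (real j * t)) * exp (- (2 * a) * cosh t) \<le> 1 * exp (- (2 * a) * t)"
  using assms le_cosh_real[of t] by (intro mult_mono) auto

lemma weighted_integrand_tail_le:
  fixes a t :: real
  assumes a: "a > 0" and t: "t \<ge> 0"
  shows "exp (- (real j * t)) * exp (- (2 * a) * cosh t) \<le> fact M / a ^ M * exp (- (real M * t))"
proof -
  have "exp (- (real j * t)) * exp (- (2 * a) * cosh t)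
      = exp (- (a * exp t)) * (exp (- (real j * t)) * exp (- (a * exp (-t))))"
    unfolding exp_minus_mult_cosh by (simp only: mult_ac)
  also have "\<dots> \<le> exp (- (a * exp t)) * (1 * 1)"
    using a t by (intro mult_left_mono mult_mono) auto
  also have "\<dots> \<le> fact M / (a * exp t) ^ M"
    using exp_minus_le_fact_div_power[of "a * exp t" M] a by simp
  also have "\<dots> = fact M / a ^ M * exp (- (real M * t))"
    by (simp add: power_mult_distrib exp_minus field_simps flip: exp_of_nat_mult)
  finally show ?thesis .
qed

lemma mult_le_max_endpoints:
  fixes c y :: real
  assumes "lo \<le> y" "y \<le> hi"
  shows "c * y \<le> max (c * lo) (c * hi)"
proof (cases "c \<ge> 0")
  case True
  then show ?thesis using mult_left_mono[OF assms(2) True] by linarith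
next
  case False
  then show ?thesis using mult_left_mono_neg[OF assms(1), of c] by linarith
qed

lemma min_endpoints_le_mult:
  fixes c y :: real
  assumes "lo \<le> y" "y \<le> hi"
  shows "min (c * lo) (c * hi) \<le> c * y"
  using mult_le_max_endpoints[OF assms, of "-c"] by simp

definition Jweight :: "nat \<Rightarrow> real \<Rightarrow> real" where
  "Jweight j x = integral {0..} (\<lambda>t. exp (- (real j * t)) * exp (- x * cosh t))"

lemma J_0_eq_Jweight: "J 0 x = Jweight 0 x"
  by (simp add: J_def Jweight_def)

lemma Jexp_eq_Jweight: "Jexp x = Jweight 1 x"
  by (simp add: Jexp_def Jweight_def)

text \<open>Both bounds split the integral at ln r: on [0, ln r] the integrand is compared with the
  explicitly integrable truncation, and the tail beyond ln r is either bounded by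
  fact M / (a ^ M * M * r ^ M) or dropped.\<close>

lemma Jweight_le_trunc:
  fixes a r :: real
  assumes x: "x = 2 * a" and a: "a > 0" and "odd NP" "odd NQ" "M \<ge> 1" "r \<ge> 1"
    and ln_r: "lo \<le> ln r" "ln r \<le> hi"
    and bound: "trunc_integral_rat NP NQ j a r + max (trunc_integral_ln NP NQ j a * lo) (trunc_integral_ln NP NQ j a * hi)
        + fact M / a ^ M / (real M * r ^ M) \<le> u"
  shows "Jweight j x \<le> u"
proof -
  define f where "f = (\<lambda>t::real. exp (- (real j * t)) * exp (- (2 * a) * cosh t))"
  have "0 \<le> ln r" using \<open>r \<ge> 1\<close> by simp
  have cont: "continuous_on {0..} f" unfolding f_def by (intro continuous_intros)
  have f_le: "\<bar>f t\<bar> \<le> 1 * exp (- (2 * a) * t)" if "t \<ge> 0" for t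
    using weighted_integrand_le_exp[OF a that] by (simp add: f_def)
  have "0 < 2 * a" using a by simp
  note split = integral_Ici_split[OF cont f_le this \<open>0 \<le> ln r\<close>]
  have "integral {0..ln r} f \<le> integral {0..ln r} (trunc_integrand NP NQ j a)"
    using split(1) weighted_integrand_le_trunc[OF a assms(3,4)]
    by (intro integral_le has_integral_integrable[OF trunc_integrand_has_integral[OF \<open>r \<ge> 1\<close>]])
      (auto simp: f_def)
  also have "\<dots> = trunc_integral_rat NP NQ j a r + trunc_integral_ln NP NQ j a * ln r"
    by (rule integral_unique[OF trunc_integrand_has_integral[OF \<open>r \<ge> 1\<close>]])
  also have "trunc_integral_ln NP NQ j a * ln r \<le> max (trunc_integral_ln NP NQ j a * lo) (trunc_integral_ln NP NQ j a * hi)"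
    by (rule mult_le_max_endpoints[OF ln_r])
  finally have head: "integral {0..ln r} f \<le> trunc_integral_rat NP NQ j a r + max (trunc_integral_ln NP NQ j a * lo) (trunc_integral_ln NP NQ j a * hi)"
    by simp
  have "real M > 0" using \<open>M \<ge> 1\<close> by simp
  note tail_majorant = has_integral_mult_right[OF has_integral_exp_minus_to_infinity[OF this, of "ln r"], of "fact M / a ^ M"]
  have "integral {ln r..} f \<le> integral {ln r..} (\<lambda>t. fact M / a ^ M * exp (- real M * t))"
    using split(2) weighted_integrand_tail_le[OF a, of _ j M] \<open>0 \<le> ln r\<close>
    by (intro integral_le has_integral_integrable[OF tail_majorant]) (auto simp: f_def)
  also have "\<dots> = fact M / a ^ M / (real M * r ^ M)"
    using integral_unique[OF tail_majorant] \<open>r \<ge> 1\<close>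
    by (simp add: exp_minus exp_of_nat_mult field_simps)
  finally have "integral {ln r..} f \<le> fact M / a ^ M / (real M * r ^ M)" .
  with head bound split(3) cont a \<open>0 \<le> ln r\<close> show ?thesis
    unfolding Jweight_def x f_def[symmetric] by auto
qed

lemma trunc_le_Jweight:
  fixes a r :: real
  assumes x: "x = 2 * a" and a: "a > 0" "a \<le> 1" and "even NP" "r \<ge> 1"
    and ln_r: "lo \<le> ln r" "ln r \<le> hi"
    and bound: "l \<le> trunc_integral_rat NP 4 j a r + min (trunc_integral_ln NP 4 j a * lo) (trunc_integral_ln NP 4 j a * hi)"
  shows "l \<le> Jweight j x"
proof -
  define f where "f = (\<lambda>t::real. exp (- (real j * t)) * exp (- (2 * a) * cosh t))"
  have "0 \<le> ln r" using \<open>r \<ge> 1\<close> by simp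
  have cont: "continuous_on {0..} f" unfolding f_def by (intro continuous_intros)
  have f_le: "\<bar>f t\<bar> \<le> 1 * exp (- (2 * a) * t)" if "t \<ge> 0" for t
    using weighted_integrand_le_exp[OF a(1) that] by (simp add: f_def)
  have "0 < 2 * a" using a by simp
  note split = integral_Ici_split[OF cont f_le this \<open>0 \<le> ln r\<close>]
  have "min (trunc_integral_ln NP 4 j a * lo) (trunc_integral_ln NP 4 j a * hi) \<le> trunc_integral_ln NP 4 j a * ln r"
    by (rule min_endpoints_le_mult[OF ln_r])
  then have "l \<le> trunc_integral_rat NP 4 j a r + trunc_integral_ln NP 4 j a * ln r"
    using bound by linarith
  also have "\<dots> = integral {0..ln r} (trunc_integrand NP 4 j a)"
    by (rule integral_unique[OF trunc_integrand_has_integral[OF \<open>r \<ge> 1\<close>], symmetric])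
  also have "\<dots> \<le> integral {0..ln r} f"
    using split(1) trunc_le_weighted_integrand[OF a \<open>even NP\<close>]
    by (intro integral_le has_integral_integrable[OF trunc_integrand_has_integral[OF \<open>r \<ge> 1\<close>]])
      (auto simp: f_def)
  also have "\<dots> \<le> integral {0..} f"
    by (rule integral_subset_le[OF _ split(1) integrable_on_Ici_exp_majorant[OF cont f_le \<open>0 < 2 * a\<close>]])
      (auto simp: f_def)
  finally show ?thesis unfolding Jweight_def x f_def .
qed

lemma ln_2_bounds: "69314 / 100000 \<le> ln (2::real)" "ln (2::real) \<le> 69315 / 100000"
proof -
  have "1 / 2 \<le> (\<Sum>m<12. (- (69314 / 100000 :: real)) ^ m / fact m)"
    by (simp add: taylor_eval_simps)
  also have "\<dots> \<le> exp (- (69314 / 100000))"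
    by (rule exp_minus_ge_taylor_sum_even) simp_all
  finally have "exp (69314 / 100000 :: real) \<le> 2" by (simp add: exp_minus field_simps)
  then show "69314 / 100000 \<le> ln (2::real)" by (subst ln_ge_iff) simp_all
  have "2 \<le> (\<Sum>m<12. (69315 / 100000 :: real) ^ m / fact m)"
    by (simp add: taylor_eval_simps)
  also have "\<dots> \<le> exp (69315 / 100000)"
    by (rule exp_ge_taylor_sum) simp
  finally have "ln 2 \<le> ln (exp (69315 / 100000 :: real))" by (subst ln_le_cancel_iff) auto
  then show "ln (2::real) \<le> 69315 / 100000" by simp
qed

lemma ln_32_bounds: "5 * (69314 / 100000) \<le> ln (32::real)" "ln (32::real) \<le> 5 * (69315 / 100000)"
  using ln_2_bounds ln_realpow[of 2 5] by simp_all

lemma J_0_half_ge: "453563 / 500000 \<le> J 0 (1 / 2)"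
  unfolding J_0_eq_Jweight
  by (rule trunc_le_Jweight[OF _ _ _ _ _ ln_32_bounds, where a = "1 / 4" and NP = 20])
    (simp_all add: trunc_eval_simps)

lemma J_0_half_le: "J 0 (1 / 2) \<le> 232899 / 250000"
  unfolding J_0_eq_Jweight
  by (rule Jweight_le_trunc[OF _ _ _ _ _ _ ln_32_bounds, where a = "1 / 4" and NP = 21 and NQ = 3 and M = 8])
    (simp_all add: trunc_eval_simps)

lemma Jexp_half_ge: "221393 / 500000 \<le> Jexp (1 / 2)"
  unfolding Jexp_eq_Jweight
  by (rule trunc_le_Jweight[OF _ _ _ _ _ ln_32_bounds, where a = "1 / 4" and NP = 20])
    (simp_all add: trunc_eval_simps)

lemma Jexp_half_le: "Jexp (1 / 2) \<le> 6943 / 15625"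
  unfolding Jexp_eq_Jweight
  by (rule Jweight_le_trunc[OF _ _ _ _ _ _ ln_32_bounds, where a = "1 / 4" and NP = 21 and NQ = 3 and M = 8])
    (simp_all add: trunc_eval_simps)

lemma J_0_63_le: "J 0 (63 / 100) \<le> 185977 / 250000"
  unfolding J_0_eq_Jweight
  by (rule Jweight_le_trunc[OF _ _ _ _ _ _ ln_32_bounds, where a = "63 / 200" and NP = 27 and NQ = 3 and M = 10])
    (simp_all add: trunc_eval_simps)

lemma Jexp_63_ge: "37287 / 100000 \<le> Jexp (63 / 100)"
  unfolding Jexp_eq_Jweight
  by (rule trunc_le_Jweight[OF _ _ _ _ _ ln_32_bounds, where a = "63 / 200" and NP = 26])
    (simp_all add: trunc_eval_simps)

lemma J_0_3_5_ge: "774993 / 1000000 \<le> J 0 (3 / 5)"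
  unfolding J_0_eq_Jweight
  by (rule trunc_le_Jweight[OF _ _ _ _ _ ln_32_bounds, where a = "3 / 10" and NP = 26])
    (simp_all add: trunc_eval_simps)

lemma J_0_3_5_le: "J 0 (3 / 5) \<le> 779353 / 1000000"
  unfolding J_0_eq_Jweight
  by (rule Jweight_le_trunc[OF _ _ _ _ _ _ ln_32_bounds, where a = "3 / 10" and NP = 27 and NQ = 3 and M = 10])
    (simp_all add: trunc_eval_simps)

lemma Jexp_3_5_ge: "19401 / 50000 \<le> Jexp (3 / 5)"
  unfolding Jexp_eq_Jweight
  by (rule trunc_le_Jweight[OF _ _ _ _ _ ln_32_bounds, where a = "3 / 10" and NP = 26])
    (simp_all add: trunc_eval_simps)

lemma Jexp_3_5_le: "Jexp (3 / 5) \<le> 97241 / 250000"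
  unfolding Jexp_eq_Jweight
  by (rule Jweight_le_trunc[OF _ _ _ _ _ _ ln_32_bounds, where a = "3 / 10" and NP = 27 and NQ = 3 and M = 10])
    (simp_all add: trunc_eval_simps)

lemma exp_minus_half_ge: "60653 / 100000 \<le> exp (- (1 / 2) :: real)"
  by (rule order_trans[OF _ exp_minus_ge_taylor_sum_even[of _ 14]])
    (simp_all add: taylor_eval_simps)

lemma exp_minus_half_le: "exp (- (1 / 2) :: real) \<le> 606531 / 1000000"
  by (rule order_trans[OF exp_minus_le_taylor_sum_odd[of _ 13]])
    (simp_all add: taylor_eval_simps)

lemma exp_minus_63_ge: "532591 / 1000000 \<le> exp (- (63 / 100) :: real)"
  by (rule order_trans[OF _ exp_minus_ge_taylor_sum_even[of _ 14]])
    (simp_all add: taylor_eval_simps)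

lemma exp_minus_3_5_ge: "548811 / 1000000 \<le> exp (- (3 / 5) :: real)"
  by (rule order_trans[OF _ exp_minus_ge_taylor_sum_even[of _ 14]])
    (simp_all add: taylor_eval_simps)

lemma exp_minus_3_5_le: "exp (- (3 / 5) :: real) \<le> 137203 / 250000"
  by (rule order_trans[OF exp_minus_le_taylor_sum_odd[of _ 13]])
    (simp_all add: taylor_eval_simps)

section \<open>The maximum of pK\<close>

lemma mult_J_1_eq_Jexp: "x > 0 \<Longrightarrow> x * J 1 x = exp (-x) + x * Jexp x"
  unfolding J_1_eq_Jexp by (simp add: field_simps)

lemma Kratio_eq_Jexp: "x > 0 \<Longrightarrow> Kratio x = (exp (-x) + x * Jexp x) / J 0 x"
  unfolding Kratio_def by (subst mult_J_1_eq_Jexp) simp_all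

lemma Kratio_half_less_1: "Kratio (1 / 2) < 1"
proof -
  have "exp (- (1 / 2)) + 1 / 2 * Jexp (1 / 2) < J 0 (1 / 2)"
    using exp_minus_half_le Jexp_half_le J_0_half_ge by linarith
  then show ?thesis using Kratio_eq_Jexp[of "1 / 2"] J_0_pos[of "1 / 2"] by simp
qed

lemma Kratio_half_greater: "706 / 1000 < Kratio (1 / 2)"
proof -
  have "706 / 1000 * J 0 (1 / 2) < exp (- (1 / 2)) + 1 / 2 * Jexp (1 / 2)"
    using exp_minus_half_ge Jexp_half_ge J_0_half_le by linarith
  then show ?thesis using Kratio_eq_Jexp[of "1 / 2"] J_0_pos[of "1 / 2"] by (simp add: less_divide_eq)
qed

lemma Kratio_63_greater_1: "1 < Kratio (63 / 100)"
proof -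
  have "J 0 (63 / 100) < exp (- (63 / 100)) + 63 / 100 * Jexp (63 / 100)"
    using exp_minus_63_ge Jexp_63_ge J_0_63_le by linarith
  then show ?thesis using Kratio_eq_Jexp[of "63 / 100"] J_0_pos[of "63 / 100"] by simp
qed

lemma pK_3_5_tangent_bound: "pK (3 / 5) + \<bar>pK' (3 / 5)\<bar> / 10 < 107 / 100"
proof -
  have "pK' (3 / 5) = 3 / 5 * J 0 (3 / 5) - 3 / 5 * ((3 / 5) * J 1 (3 / 5))"
    unfolding pK'_def by (simp add: power2_eq_square)
  also have "\<dots> = 3 / 5 * J 0 (3 / 5) - 3 / 5 * (exp (- (3 / 5)) + 3 / 5 * Jexp (3 / 5))"
    by (simp only: mult_J_1_eq_Jexp)
  finally have deriv_eq: "pK' (3 / 5) = 3 / 5 * J 0 (3 / 5) - 3 / 5 * (exp (- (3 / 5)) + 3 / 5 * Jexp (3 / 5))" .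
  have value_eq: "pK (3 / 5) = exp (- (3 / 5)) + 3 / 5 * Jexp (3 / 5) + 9 / 25 * J 0 (3 / 5)"
    using pK_eq_Jexp[of "3 / 5"] by (simp add: power2_eq_square)
  note bounds = exp_minus_3_5_ge exp_minus_3_5_le J_0_3_5_ge J_0_3_5_le Jexp_3_5_ge Jexp_3_5_le
  have "\<bar>pK' (3 / 5)\<bar> \<le> 107961 / 25000000"
    unfolding deriv_eq using bounds by (intro abs_leI) (simp_all add: algebra_simps)
  moreover have "pK (3 / 5) \<le> 137203 / 250000 + 3 / 5 * (97241 / 250000) + 9 / 25 * (779353 / 1000000)"
    using bounds value_eq by linarith
  ultimately show ?thesis by simp
qed

lemma one_plus_sqrt_17_div_8_bounds:
  "63 / 100 < (1 + sqrt 17) / (8::real)" "(1 + sqrt 17) / (8::real) < 6404 / 10000"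
proof -
  have "404 / 100 < sqrt (17::real)" by (rule real_less_rsqrt) (simp add: power2_eq_square)
  moreover have "sqrt (17::real) < sqrt ((41232 / 10000)\<^sup>2)"
    by (rule real_sqrt_less_mono) (simp add: power2_eq_square)
  ultimately show "63 / 100 < (1 + sqrt 17) / (8::real)" "(1 + sqrt 17) / (8::real) < 6404 / 10000"
    by simp_all
qed

lemma pK''_neg:
  assumes "x \<in> {1 / 2..(1 + sqrt 17) / 8}"
  shows "pK'' x < 0"
proof -
  have "x\<^sup>2 \<le> (6404 / 10000)\<^sup>2"
    using assms one_plus_sqrt_17_div_8_bounds by (intro power_mono) auto
  moreover have "706 / 1000 < Kratio x"
    using Kratio_half_greater Kratio_mono[of "1 / 2" x] assms by auto
  ultimately have "1 + x\<^sup>2 - 2 * Kratio x < 0" by (simp add: power2_eq_square)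
  then show ?thesis
    using pK''_eq_Kratio[of x] J_0_pos[of x] assms by (simp add: mult_pos_neg)
qed

lemma pK_strict_mono_on: "strict_mono_on {0<..1 / 2} pK"
proof (rule strict_mono_onI)
  fix x y :: real assume "x \<in> {0<..1 / 2}" "y \<in> {0<..1 / 2}" "x < y"
  moreover have "Kratio y \<le> 1"
    using Kratio_half_less_1 Kratio_mono[of y "1 / 2"] calculation by auto
  ultimately show "pK x < pK y" by (intro pK_less_if_Kratio_le_1) auto
qed

lemma pK_strict_antimono:
  assumes "(1 + sqrt 17) / 8 \<le> x" "x < y"
  shows "pK y < pK x"
proof -
  have "63 / 100 < x" using assms(1) one_plus_sqrt_17_div_8_bounds(1) by linarith
  then have "1 \<le> Kratio x"
    using Kratio_63_greater_1 Kratio_mono[of "63 / 100" x] by linarith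
  then show ?thesis
    using pK_greater_if_Kratio_ge_1[of x y] assms(2) \<open>63 / 100 < x\<close> by simp
qed

lemma Kratio_eq_1_exists: obtains x0 where "1 / 2 < x0" "x0 < 63 / 100" "Kratio x0 = 1"
proof -
  have "continuous_on {1 / 2..63 / 100} Kratio"
    by (rule continuous_at_imp_continuous_on)
      (auto intro!: DERIV_isCont[OF Kratio_has_real_derivative])
  then obtain x0 where x0: "1 / 2 \<le> x0" "x0 \<le> 63 / 100" "Kratio x0 = 1"
    using IVT'[of Kratio "1 / 2" 1 "63 / 100"] Kratio_half_less_1 Kratio_63_greater_1 by auto
  moreover have "x0 \<noteq> 1 / 2" "x0 \<noteq> 63 / 100"
    using x0(3) Kratio_half_less_1 Kratio_63_greater_1 by (metis less_irrefl)+
  ultimately show ?thesis by (intro that) auto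
qed

lemma pK_less_at_Kratio_eq_1:
  assumes "0 < x0" "Kratio x0 = 1" "0 < x" "x \<noteq> x0"
  shows "pK x < pK x0"
  using assms pK_less_if_Kratio_le_1[of x x0] pK_greater_if_Kratio_ge_1[of x0 x]
  by (cases "x < x0") auto

lemma besselK_eq_iff_Kratio_eq_1:
  "x > 0 \<Longrightarrow> besselK 0 x = x * besselK 1 x \<longleftrightarrow> Kratio x = 1"
  using J_0_pos[of x] by (auto simp: Kratio_def besselK_eq_J)

lemma Kratio_eq_1_iff:
  assumes "0 < x0" "Kratio x0 = 1" "0 < x"
  shows "Kratio x = 1 \<longleftrightarrow> x = x0"
proof
  assume "Kratio x = 1"
  show "x = x0"
  proof (rule ccontr)
    assume "x \<noteq> x0"
    then consider "x < x0" | "x0 < x" by linarith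
    then show False
      using Kratio_strict_mono[of x x0] Kratio_strict_mono[of x0 x] assms \<open>Kratio x = 1\<close>
      by cases simp_all
  qed
qed (use assms in simp)

lemma besselK_roots_eq_singleton:
  assumes "0 < x0" "Kratio x0 = 1" "S \<subseteq> {0<..}" "x0 \<in> S"
  shows "{x\<in>S. besselK 0 x = x * besselK 1 x} = {x0}"
  using assms besselK_eq_iff_Kratio_eq_1 Kratio_eq_1_iff[OF assms(1,2)] by blast

lemma pK_le_tangent_3_5:
  assumes "x \<in> {1 / 2..(1 + sqrt 17) / 8}"
  shows "pK x \<le> pK (3 / 5) + pK' (3 / 5) * (x - 3 / 5)"
proof (rule le_tangent_of_antimono_derivative[OF _ _ assms])
  fix u v :: real assume uv: "1 / 2 \<le> u" "u \<le> v" "v \<le> (1 + sqrt 17) / 8"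
  show "pK' v \<le> pK' u"
  proof (rule DERIV_nonpos_imp_nonincreasing[OF uv(2)])
    fix z assume "u \<le> z" "z \<le> v"
    then show "\<exists>y. (pK' has_real_derivative y) (at z) \<and> y \<le> 0"
      using uv pK'_has_real_derivative[of z] pK''_neg[of z] by (intro exI[of _ "pK'' z"]) auto
  qed
qed (use one_plus_sqrt_17_div_8_bounds pK_has_real_derivative in auto)

lemma pK_less_107_100:
  assumes x: "x \<in> {1 / 2..63 / 100}"
  shows "pK x < 107 / 100"
proof -
  have "pK x \<le> pK (3 / 5) + \<bar>pK' (3 / 5)\<bar> * \<bar>x - 3 / 5\<bar>"
    using pK_le_tangent_3_5[of x] x one_plus_sqrt_17_div_8_bounds
      abs_ge_self[of "pK' (3 / 5) * (x - 3 / 5)"]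
    by (simp add: abs_mult)
  also have "\<dots> \<le> pK (3 / 5) + \<bar>pK' (3 / 5)\<bar> * (1 / 10)"
    using x by (intro add_left_mono mult_left_mono abs_leI) auto
  finally show ?thesis using pK_3_5_tangent_bound by simp
qed

theorem lemma2p4:
  shows "(pK \<longlongrightarrow> 1) (at_right 0)
    \<and> strict_mono_on {0<..1/2} pK
    \<and> (\<forall>x y. (1 + sqrt 17) / 8 \<le> x \<longrightarrow> x < y \<longrightarrow> pK y < pK x)
    \<and> (pK \<longlongrightarrow> 0) at_top
    \<and> (\<exists>C c. C > 0 \<and> c > 0 \<and> (\<forall>\<^sub>F x in at_top. \<bar>pK x\<bar> \<le> C * exp (- c * x)))
    \<and> (\<exists>p' p''. (\<forall>x>0. (pK has_real_derivative p' x) (at x))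
              \<and> (\<forall>x>0. (p' has_real_derivative p'' x) (at x))
              \<and> (\<forall>x\<in>{1/2..(1 + sqrt 17) / 8}. p'' x < 0))
    \<and> (\<exists>x0\<in>{1/2<..<(1 + sqrt 17) / 8}.
          (\<forall>x>0. x \<noteq> x0 \<longrightarrow> pK x < pK x0)
        \<and> {x\<in>{1/2<..<(1 + sqrt 17) / 8}. besselK 0 x = x * besselK 1 x} = {x0}
        \<and> pK x0 < 1.07)"
proof -
  obtain x0 where x0: "1 / 2 < x0" "x0 < 63 / 100" "Kratio x0 = 1"
    by (rule Kratio_eq_1_exists)
  have range: "x0 \<in> {1 / 2<..<(1 + sqrt 17) / 8}"
    using x0 one_plus_sqrt_17_div_8_bounds by auto
  have roots: "{x\<in>{1/2<..<(1 + sqrt 17) / 8}. besselK 0 x = x * besselK 1 x} = {x0}"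
    using range x0 by (intro besselK_roots_eq_singleton) auto
  have "pK x0 < 1.07" using pK_less_107_100[of x0] x0 by simp
  moreover have "\<forall>x>0. x \<noteq> x0 \<longrightarrow> pK x < pK x0"
    using pK_less_at_Kratio_eq_1 x0 by auto
  moreover have "\<exists>C c. C > 0 \<and> c > 0 \<and> (\<forall>\<^sub>F x in at_top. \<bar>pK x\<bar> \<le> C * exp (- c * x))"
    using pK_exp_decay by (intro exI[of _ 1] exI[of _ "1 / 2"]) simp
  moreover have "\<exists>p' p''. (\<forall>x>0. (pK has_real_derivative p' x) (at x))
      \<and> (\<forall>x>0. (p' has_real_derivative p'' x) (at x)) \<and> (\<forall>x\<in>{1/2..(1 + sqrt 17) / 8}. p'' x < 0)"
    using pK_has_real_derivative pK'_has_real_derivative pK''_neg by blast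
  ultimately show ?thesis
    using range roots pK_tendsto_1_at_right_0 pK_strict_mono_on pK_strict_antimono pK_tendsto_0_at_top
    by (intro conjI bexI[of _ x0]) auto
qed

end
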